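(* Let $n,m,k$ be positive integers with $k\mid n$, let $p\in(0,1/2)$, and let $\mu_1,\dots,\mu_k\in\{0,1\}^m$ be fixed. Let $V=V_1\sqcup\dots\sqcup V_k$ with $|V_i|=n/k$, where every person $v\in V_i$ answers question $s\in\{1,\dots,m\}$ with $v(s)=\mu_i(s)$ with probability $1-p$ and $v(s)=1-\mu_i(s)$ with probability $p$, independently across persons and questions. Let $\mathcal P$ be the set of cuts $\{A_s^0,A_s^1\}$, $s=1,\dots,m$, with $A_s^y=\{v\in V: v(s)=y\}$. Let $a\in\mathbb N$ be the agreement parameter and $\alpha=a/n$. If $p<(n-ka)/(3n)$, then the probability that some mindset $\mu_i$ does not induce a $\mathcal P$-tangle is at most $$k\,m\,\exp\Bigl(-\frac{2n}{9k}(1-k\alpha-3p)^2\Bigr).$$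
   Context: An orientation of $\mathcal P$ chooses one side of every cut; it is identified with $\tau\in\{0,1\}^m$ by choosing the side $A_s^{\tau(s)}$ for question $s$. An orientation $O$ is a $\mathcal P$-tangle if for all (not necessarily distinct) chosen sides $A,B,C\in O$ we have $|A\cap B\cap C|\ge a$. The mindset $\mu_i$ induces a tangle if the orientation corresponding to $\mu_i$ is a $\mathcal P$-tangle. The probability is over the random answers. *)

theory Defs
  imports "HOL-Probability.Probability"
begin

text \<open>Persons are 0..<n, questions are 0..<m, groups (mindsets) are 0..<k.
  Answers are booleans (True = 1, False = 0); an answer profile is a function
  ans :: (person, question) \<Rightarrow> bool.\<close>

definition group_of :: "nat \<Rightarrow> nat \<Rightarrow> nat \<Rightarrow> nat" where
  "group_of n k v = v div (n div k)"

definition answer_pmf :: "nat \<Rightarrow> nat \<Rightarrow> nat \<Rightarrow> real \<Rightarrow> (nat \<Rightarrow> nat \<Rightarrow> bool)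
    \<Rightarrow> (nat \<times> nat \<Rightarrow> bool) pmf" where
  "answer_pmf n m k p mu =
     Pi_pmf ({..<n} \<times> {..<m}) False
       (\<lambda>(v, s). bernoulli_pmf (if mu (group_of n k v) s then 1 - p else p))"

definition side :: "nat \<Rightarrow> (nat \<times> nat \<Rightarrow> bool) \<Rightarrow> nat \<Rightarrow> bool \<Rightarrow> nat set" where
  "side n ans s y = {v \<in> {..<n}. ans (v, s) = y}"

definition is_tangle :: "nat \<Rightarrow> nat \<Rightarrow> nat \<Rightarrow> (nat \<times> nat \<Rightarrow> bool) \<Rightarrow> (nat \<Rightarrow> bool) \<Rightarrow> bool" where
  "is_tangle n m a ans tau \<longleftrightarrow>
     (\<forall>s1<m. \<forall>s2<m. \<forall>s3<m.
        card (side n ans s1 (tau s1) \<inter> side n ans s2 (tau s2) \<inter> side n ans s3 (tau s3)) \<ge> a)"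

end

theory Submission
  imports Defs
begin

text \<open>Within the group V_i, the number of persons disagreeing with \<mu>_i on a fixed question is
  binomially distributed with parameters n/k and p. If on every question at most (n/k - a)/3
  persons of V_i disagree with \<mu>_i, then any three sides chosen by \<mu>_i share at least a persons
  of V_i, so \<mu>_i induces a tangle. The threshold exceeds the mean (n/k) p by
  \<epsilon> = (n/k)(1 - k\<alpha> - 3p)/3, so Hoeffding's inequality bounds each of the k m failure events
  by exp(-2\<epsilon>^2 k/n), and a union bound finishes the proof.\<close>

lemma map_pmf_disagree_bernoulli:
  assumes "p \<in> {0..1}"
  shows "map_pmf (\<lambda>b. b \<noteq> c) (bernoulli_pmf (if c then 1 - p else p)) = bernoulli_pmf p"
proof (cases c)
  case True
  have "map_pmf Not (bernoulli_pmf (1 - p)) = bernoulli_pmf p"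
  proof (rule pmf_eqI)
    fix b
    show "pmf (map_pmf Not (bernoulli_pmf (1 - p))) b = pmf (bernoulli_pmf p) b"
      using pmf_map_inj'[of Not "bernoulli_pmf (1 - p)" "\<not> b"] assms
      by (cases b) (simp_all add: inj_def)
  qed
  with True show ?thesis by (simp add: comp_def)
qed simp

lemma map_pmf_card_disagree_Pi_pmf:
  assumes "finite A" "B \<subseteq> A" "p \<in> {0..1}"
    and flip: "\<And>x. x \<in> B \<Longrightarrow> map_pmf (\<lambda>b. b \<noteq> c) (P x) = bernoulli_pmf p"
  shows "map_pmf (\<lambda>f. card {x\<in>B. f x \<noteq> c}) (Pi_pmf A d P) = binomial_pmf (card B) p"
proof -
  have "finite B" using assms(1,2) by (rule finite_subset[rotated])
  then have "binomial_pmf (card B) p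
      = map_pmf (\<lambda>f. card {x\<in>B. f x}) (Pi_pmf B (d \<noteq> c) (\<lambda>_. bernoulli_pmf p))"
    using assms(3) by (intro binomial_pmf_altdef') auto
  also have "Pi_pmf B (d \<noteq> c) (\<lambda>_. bernoulli_pmf p)
      = Pi_pmf B (d \<noteq> c) (\<lambda>x. map_pmf (\<lambda>b. b \<noteq> c) (P x))"
    using flip by (intro Pi_pmf_cong) auto
  also have "\<dots> = map_pmf (\<lambda>f. (\<lambda>b. b \<noteq> c) \<circ> f) (Pi_pmf B d P)"
    using \<open>finite B\<close> by (rule Pi_pmf_map) simp
  also have "Pi_pmf B d P = map_pmf (\<lambda>f x. if x \<in> B then f x else d) (Pi_pmf A d P)"
    using assms(1,2) by (rule Pi_pmf_subset)
  finally show ?thesis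
    by (simp add: pmf.map_comp comp_def cong: conj_cong)
qed

definition group_members :: "nat \<Rightarrow> nat \<Rightarrow> nat \<Rightarrow> nat set" where
  "group_members n k i = {i * (n div k)..<Suc i * (n div k)}"

definition disagreeing :: "nat set \<Rightarrow> (nat \<times> nat \<Rightarrow> bool) \<Rightarrow> (nat \<Rightarrow> bool) \<Rightarrow> nat \<Rightarrow> nat set" where
  "disagreeing V ans tau s = {v \<in> V. ans (v, s) \<noteq> tau s}"

lemma group_of_group_members: "v \<in> group_members n k i \<Longrightarrow> group_of n k v = i"
  unfolding group_members_def group_of_def by (intro div_nat_eqI) (auto simp: mult.commute)

lemma group_members_subset: "i < k \<Longrightarrow> group_members n k i \<subseteq> {..<n}"
proof -
  assume "i < k"
  then have "Suc i * (n div k) \<le> k * (n div k)" by (intro mult_le_mono1) simp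
  also have "\<dots> \<le> n" by simp
  finally show ?thesis unfolding group_members_def by auto
qed

lemma card_group_members [simp]: "card (group_members n k i) = n div k"
  by (simp add: group_members_def)

lemma map_pmf_card_disagreeing_answer_pmf:
  assumes "i < k" "s < m" "p \<in> {0..1}"
  shows "map_pmf (\<lambda>ans. card (disagreeing (group_members n k i) ans (mu i) s)) (answer_pmf n m k p mu)
         = binomial_pmf (n div k) p"
proof -
  define V where "V = group_members n k i"
  have card_eq: "card (disagreeing V ans (mu i) s) = card {x \<in> V \<times> {s}. ans x \<noteq> mu i s}" for ans
  proof -
    have "{x \<in> V \<times> {s}. ans x \<noteq> mu i s} = (\<lambda>v. (v, s)) ` disagreeing V ans (mu i) s"
      unfolding disagreeing_def by auto
    then show ?thesis by (simp add: card_image inj_on_def)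
  qed
  have "map_pmf (\<lambda>ans. card {x \<in> V \<times> {s}. ans x \<noteq> mu i s}) (answer_pmf n m k p mu)
        = binomial_pmf (card (V \<times> {s})) p"
    unfolding answer_pmf_def
  proof (rule map_pmf_card_disagree_Pi_pmf)
    show "V \<times> {s} \<subseteq> {..<n} \<times> {..<m}"
      using group_members_subset[OF assms(1)] assms(2) by (auto simp: V_def)
    show "map_pmf (\<lambda>b. b \<noteq> mu i s)
            ((\<lambda>(v, s). bernoulli_pmf (if mu (group_of n k v) s then 1 - p else p)) x)
          = bernoulli_pmf p" if "x \<in> V \<times> {s}" for x
    proof -
      from that obtain v where "v \<in> V" "x = (v, s)" by auto
      then show ?thesis
        using map_pmf_disagree_bernoulli[OF assms(3), of "mu i s"]
        by (simp add: V_def group_of_group_members)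
    qed
  qed (use assms(3) in auto)
  then show ?thesis
    unfolding V_def[symmetric] card_eq by (simp add: V_def card_cartesian_product)
qed

lemma is_tangle_if_few_disagreeing:
  assumes "V \<subseteq> {..<n}"
    and few: "\<And>s. s < m \<Longrightarrow> a + 3 * card (disagreeing V ans tau s) \<le> card V"
  shows "is_tangle n m a ans tau"
  unfolding is_tangle_def
proof (intro allI impI)
  fix s1 s2 s3 assume s: "s1 < m" "s2 < m" "s3 < m"
  let ?D = "\<lambda>s. disagreeing V ans tau s"
  have "finite V" using assms(1) finite_subset by blast
  then have fin: "finite (?D s)" for s by (simp add: disagreeing_def)
  have "card (?D s1 \<union> ?D s2 \<union> ?D s3) \<le> card (?D s1) + card (?D s2) + card (?D s3)"
    by (meson card_Un_le add_right_mono order_trans)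
  then have "a \<le> card V - card (?D s1 \<union> ?D s2 \<union> ?D s3)"
    using few[OF s(1)] few[OF s(2)] few[OF s(3)] by linarith
  also have "\<dots> \<le> card (V - (?D s1 \<union> ?D s2 \<union> ?D s3))"
    by (rule diff_card_le_card_Diff) (simp add: fin)
  also have "\<dots> \<le> card (side n ans s1 (tau s1) \<inter> side n ans s2 (tau s2) \<inter> side n ans s3 (tau s3))"
    using assms(1) by (intro card_mono) (auto simp: side_def disagreeing_def)
  finally show "a \<le> card (side n ans s1 (tau s1) \<inter> side n ans s2 (tau s2) \<inter> side n ans s3 (tau s3))" .
qed

lemma not_is_tangle_subset_UN_many_disagreeing:
  "{ans. \<exists>i<k. \<not> is_tangle n m a ans (mu i)}
   \<subseteq> (\<Union>(i, s)\<in>{..<k} \<times> {..<m}.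
        {ans. (real (n div k) - real a) / 3 \<le> card (disagreeing (group_members n k i) ans (mu i) s)})"
proof
  fix ans assume "ans \<in> {ans. \<exists>i<k. \<not> is_tangle n m a ans (mu i)}"
  then obtain i where i: "i < k" "\<not> is_tangle n m a ans (mu i)" by blast
  then obtain s where "s < m" "n div k < a + 3 * card (disagreeing (group_members n k i) ans (mu i) s)"
    using is_tangle_if_few_disagreeing[OF group_members_subset, where m = m and a = a]
    by (metis card_group_members not_le)
  with i(1) show "ans \<in> (\<Union>(i, s)\<in>{..<k} \<times> {..<m}.
      {ans. (real (n div k) - real a) / 3 \<le> card (disagreeing (group_members n k i) ans (mu i) s)})"
    by force
qed

lemma prob_card_disagreeing_ge_le:
  assumes "i < k" "s < m" "p \<in> {0..1}" "n div k > 0" "real (n div k) * p \<le> t"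
  shows "measure_pmf.prob (answer_pmf n m k p mu)
           {ans. t \<le> card (disagreeing (group_members n k i) ans (mu i) s)}
         \<le> exp (-2 * (t - real (n div k) * p)\<^sup>2 / real (n div k))"
proof -
  let ?N = "n div k"
  have "measure_pmf.prob (answer_pmf n m k p mu) {ans. t \<le> card (disagreeing (group_members n k i) ans (mu i) s)}
      = measure_pmf.prob (binomial_pmf ?N p) {c. ?N * p + (t - ?N * p) \<le> c}"
    by (simp flip: map_pmf_card_disagreeing_answer_pmf[OF assms(1-3), of n mu] add: vimage_def)
  also have "\<dots> \<le> exp (-2 * (t - real ?N * p)\<^sup>2 / ?N)"
    using assms(3-5) by (intro binomial_distribution.prob_ge) (simp_all add: binomial_distribution_def)
  finally show ?thesis .
qed

lemma prob_UN_le_card_mult: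
  fixes b :: real
  assumes "finite I" "\<And>x. x \<in> I \<Longrightarrow> measure_pmf.prob M (E x) \<le> b"
  shows "measure_pmf.prob M (\<Union>x\<in>I. E x) \<le> card I * b"
proof -
  have "measure_pmf.prob M (\<Union>x\<in>I. E x) \<le> (\<Sum>x\<in>I. measure_pmf.prob M (E x))"
    using assms(1) by (rule measure_pmf.finite_measure_subadditive_finite) simp
  also have "\<dots> \<le> card I * b"
    using assms(2) by (rule sum_bounded_above)
  finally show ?thesis .
qed

theorem lemma1:
  fixes n m k a :: nat and p :: real and mu :: "nat \<Rightarrow> nat \<Rightarrow> bool"
  assumes "n > 0" "m > 0" "k > 0" "k dvd n"
    and "0 < p" "p < 1/2"
    and "p < (real n - real k * real a) / (3 * real n)"
  shows "measure_pmf.prob (answer_pmf n m k p mu)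
           {ans. \<exists>i<k. \<not> is_tangle n m a ans (mu i)}
         \<le> real k * real m *
           exp (- (2 * real n / (9 * real k)) * (1 - real k * (real a / real n) - 3 * p)^2)"
proof -
  define N where "N = n div k"
  define t where "t = (real N - real a) / 3"
  have n_eq: "real n = real k * real N"
    using assms(4) by (simp add: N_def flip: of_nat_mult)
  have "N > 0"
    using assms(1,3,4) by (auto simp: N_def elim!: dvdE)
  have "real k * (3 * p * real N) < real k * (real N - real a)"
    using assms(1,7) n_eq by (simp add: field_simps)
  then have "real N * p \<le> t"
    using assms(3) by (simp add: t_def mult_ac)
  have "measure_pmf.prob (answer_pmf n m k p mu) {ans. \<exists>i<k. \<not> is_tangle n m a ans (mu i)}
      \<le> measure_pmf.prob (answer_pmf n m k p mu) (\<Union>(i, s)\<in>{..<k} \<times> {..<m}.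
            {ans. t \<le> card (disagreeing (group_members n k i) ans (mu i) s)})"
    using not_is_tangle_subset_UN_many_disagreeing unfolding t_def N_def
    by (rule measure_pmf.finite_measure_mono) simp
  also have "\<dots> \<le> card ({..<k} \<times> {..<m}) * exp (-2 * (t - real N * p)\<^sup>2 / real N)"
    using prob_card_disagreeing_ge_le assms(5,6) \<open>N > 0\<close> \<open>real N * p \<le> t\<close>
    by (intro prob_UN_le_card_mult) (auto simp: N_def)
  also have "-2 * (t - real N * p)\<^sup>2 / real N
      = - (2 * real n / (9 * real k)) * (1 - real k * (real a / real n) - 3 * p)\<^sup>2"
    using n_eq assms(3) \<open>N > 0\<close> by (simp add: t_def field_simps power2_eq_square)
  finally show ?thesis
    by (simp add: card_cartesian_product)
qed

end
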